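(* Let $m,n,p\ge 1$, let $B\in\mathbb{R}^{m\times n}$ (standing for the current warped image $D\circ\tau$), let $J:\mathbb{R}^p\to\mathbb{R}^{m\times n}$ be a linear map with adjoint $J^*$ such that $J^*J$ is invertible, and let $\lambda>0$, $\sigma>0$. Define, for $X,E\in\mathbb{R}^{m\times n}$, $\Delta\tau\in\mathbb{R}^p$, $Y\in\mathbb{R}^{m\times n}$, $$\mathcal{L}_\sigma(X,E,\Delta\tau;Y)=\|X\|_*+\lambda\|E\|_1+\langle Y,B+J\Delta\tau-X-E\rangle+\tfrac{\sigma}{2}\|B+J\Delta\tau-X-E\|_F^2 .$$ Fix $X^{k+1},E^k,Y^k\in\mathbb{R}^{m\times n}$ and $\Delta\tau^k\in\mathbb{R}^p$, and define successively $$\Delta\tau^{k+1/2}=\operatorname{argmin}_{\Delta\tau}\mathcal{L}_\sigma(X^{k+1},E^k,\Delta\tau;Y^k),\quad E^{k+1}=\operatorname{argmin}_{E}\mathcal{L}_\sigma(X^{k+1},E,\Delta\tau^{k+1/2};Y^k),$$ $$\Delta\tau^{k+1}=\operatorname{argmin}_{\Delta\tau}\mathcal{L}_\sigma(X^{k+1},E^{k+1},\Delta\tau;Y^k).$$ Let $\mathcal{T}$ be the self-adjoint positive semidefinite linear operator on $\mathbb{R}^{m\times n}\times\mathbb{R}^p$ given by $\mathcal{T}(E,\Delta\tau)=\big(J(J^*J)^{-1}J^*E,\,0\big)$, and $\|w\|_{\mathcal{T}}^2=\langle w,\mathcal{T}w\rangle$. Then $$(E^{k+1},\Delta\tau^{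k+1})=\operatorname{argmin}_{E,\Delta\tau}\Big\{\mathcal{L}_\sigma(X^{k+1},E,\Delta\tau;Y^k)+\tfrac{\sigma}{2}\big\|(E,\Delta\tau)-(E^k,\Delta\tau^k)\big\|_{\mathcal{T}}^2\Big\}.$$
   Context: $\|X\|_*$ is the nuclear norm (sum of singular values), $\|E\|_1$ the sum of absolute values of entries, $\|\cdot\|_F$ the Frobenius norm, and $\langle\cdot,\cdot\rangle$ the trace inner product. All argmins above have unique minimizers. *)

theory Defs
  imports "HOL-Analysis.Analysis"
begin

text \<open>Matrices in R^(m x n) are represented as real^'n^'m; the Frobenius norm is
  norm, and the trace inner product is the inner product \<bullet> on this type.\<close>

definition psd_sqrt :: "real^'n^'n \<Rightarrow> real^'n^'n" where
  "psd_sqrt M = (THE S. transpose S = S \<and> (\<forall>x. 0 \<le> x \<bullet> (S *v x)) \<and> S ** S = M)"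

text \<open>Nuclear norm = sum of singular values = trace of the PSD square root of A^T A.\<close>
definition nuclear_norm :: "real^'n^'m \<Rightarrow> real" where
  "nuclear_norm A = trace (psd_sqrt (transpose A ** A))"

definition l1_norm :: "real^'n^'m \<Rightarrow> real" where
  "l1_norm E = (\<Sum>i\<in>UNIV. \<Sum>j\<in>UNIV. \<bar>E $ i $ j\<bar>)"

definition aug_lag ::
  "real \<Rightarrow> real \<Rightarrow> real^'n^'m \<Rightarrow> (real^'p \<Rightarrow> real^'n^'m)
    \<Rightarrow> real^'n^'m \<Rightarrow> real^'n^'m \<Rightarrow> real^'p \<Rightarrow> real^'n^'m \<Rightarrow> real" where
  "aug_lag lam sig B J X E dt Y =
     nuclear_norm X + lam * l1_norm E + Y \<bullet> (B + J dt - X - E)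
     + sig / 2 * (norm (B + J dt - X - E))\<^sup>2"

definition T_op :: "(real^'p \<Rightarrow> real^'n^'m) \<Rightarrow> (real^'n^'m) \<times> (real^'p) \<Rightarrow> (real^'n^'m) \<times> (real^'p)" where
  "T_op J w = (J (inv (adjoint J \<circ> J) (adjoint J (fst w))), 0)"

definition T_seminorm_sq :: "(real^'p \<Rightarrow> real^'n^'m) \<Rightarrow> (real^'n^'m) \<times> (real^'p) \<Rightarrow> real" where
  "T_seminorm_sq J w = w \<bullet> T_op J w"

end

theory Submission
  imports Defs
begin

text \<open>The two \<open>\<Delta>\<tau>\<close>-steps are least-squares problems: their optimality conditions say that
  \<open>Y + \<sigma> (B + J \<Delta>\<tau> - X - E)\<close> is orthogonal to the range of \<open>J\<close>. Subtracting the conditions at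
  \<open>\<Delta>\<tau>\<^sup>k\<^sup>+\<^sup>\<onehalf>\<close> and \<open>\<Delta>\<tau>\<^sup>k\<^sup>+\<^sup>1\<close> gives \<open>J (\<Delta>\<tau>\<^sup>k\<^sup>+\<^sup>1 - \<Delta>\<tau>\<^sup>k\<^sup>+\<^sup>\<onehalf>) = P (E\<^sup>k\<^sup>+\<^sup>1 - E\<^sup>k)\<close>, where
  \<open>P = J (J\<^sup>* J)\<^sup>-\<^sup>1 J\<^sup>*\<close> is the orthogonal projection onto the range of \<open>J\<close>, and \<open>T (E, \<Delta>\<tau>) = (P E, 0)\<close>.
  Hence the variational inequality of the convex \<open>E\<close>-step is precisely the optimality condition
  of the \<open>T\<close>-regularised joint problem at \<open>(E\<^sup>k\<^sup>+\<^sup>1, \<Delta>\<tau>\<^sup>k\<^sup>+\<^sup>1)\<close>. Expanding the joint objective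
  around this point leaves a gap of at least \<open>\<sigma>/2 (\<parallel>J \<Delta>\<tau>' - E'\<parallel>\<^sup>2 + \<parallel>P E'\<parallel>\<^sup>2)\<close> for an
  increment \<open>(E', \<Delta>\<tau>')\<close>, and this is positive for a nonzero increment because \<open>J\<close> is injective.\<close>

lemma convex_on_l1_norm: "convex_on UNIV l1_norm"
proof (rule convex_onI)
  fix t :: real and a b :: "real^'n^'m"
  assume t: "0 < t" "t < 1"
  have "\<bar>((1-t) *\<^sub>R a + t *\<^sub>R b) $ i $ j\<bar> \<le> (1-t) * \<bar>a $ i $ j\<bar> + t * \<bar>b $ i $ j\<bar>" for i j
    using t abs_triangle_ineq[of "(1-t) * a $ i $ j" "t * b $ i $ j"] by (simp add: abs_mult)
  then have "l1_norm ((1-t) *\<^sub>R a + t *\<^sub>R b) \<le> (\<Sum>i\<in>UNIV. \<Sum>j\<in>UNIV. (1-t) * \<bar>a $ i $ j\<bar> + t * \<bar>b $ i $ j\<bar>)"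
    unfolding l1_norm_def by (intro sum_mono) auto
  also have "\<dots> = (1-t) * l1_norm a + t * l1_norm b"
    unfolding l1_norm_def by (simp add: sum.distrib sum_distrib_left)
  finally show "l1_norm ((1-t) *\<^sub>R a + t *\<^sub>R b) \<le> (1-t) * l1_norm a + t * l1_norm b" .
qed simp

lemma nonneg_if_perturbation_nonneg:
  fixes A C :: real
  assumes "C \<ge> 0" and perturb: "\<And>t. 0 < t \<Longrightarrow> t < 1 \<Longrightarrow> 0 \<le> t * A + t\<^sup>2 * C"
  shows "A \<ge> 0"
proof (rule ccontr)
  assume "\<not> A \<ge> 0"
  define t where "t = min (1/2) (-A / (2 * (C + 1)))"
  have t: "0 < t" "t < 1" using \<open>\<not> A \<ge> 0\<close> assms(1) by (auto simp: t_def divide_neg_pos)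
  have "t * C \<le> (-A / (2 * (C + 1))) * C" using assms(1) by (intro mult_right_mono) (auto simp: t_def)
  also have "\<dots> \<le> -A / 2" using assms(1) \<open>\<not> A \<ge> 0\<close> by (simp add: field_simps)
  finally have "t * (A + t * C) < 0" using \<open>\<not> A \<ge> 0\<close> t by (simp add: mult_pos_neg)
  with perturb[OF t] show False by (simp add: power2_eq_square algebra_simps)
qed

lemma power2_norm_add:
  fixes x y :: "'a::real_inner"
  shows "(norm (x + y))\<^sup>2 = (norm x)\<^sup>2 + 2 * (x \<bullet> y) + (norm y)\<^sup>2"
  by (simp add: power2_norm_eq_inner inner_add_left inner_add_right inner_commute)

lemma convex_plus_quadratic_min_variational_ineq:
  fixes L :: "'a::real_vector \<Rightarrow> 'b::real_inner" and f :: "'a \<Rightarrow> real"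
  assumes "linear L" "convex_on UNIV f" "\<sigma> \<ge> 0"
    and min: "\<And>z. f x + Y \<bullet> (c + L x) + \<sigma> / 2 * (norm (c + L x))\<^sup>2
                \<le> f z + Y \<bullet> (c + L z) + \<sigma> / 2 * (norm (c + L z))\<^sup>2"
  shows "f x - f y \<le> (Y + \<sigma> *\<^sub>R (c + L x)) \<bullet> L (y - x)"
proof -
  let ?r = "c + L x" and ?h = "L (y - x)"
  have "0 \<le> t * (f y - f x + (Y + \<sigma> *\<^sub>R ?r) \<bullet> ?h) + t\<^sup>2 * (\<sigma> / 2 * (norm ?h)\<^sup>2)"
    if t: "0 < t" "t < 1" for t
  proof -
    have z: "x + t *\<^sub>R (y - x) = (1 - t) *\<^sub>R x + t *\<^sub>R y" by (simp add: algebra_simps)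
    have conv: "f (x + t *\<^sub>R (y - x)) \<le> (1 - t) * f x + t * f y"
      unfolding z using t by (intro convex_onD[OF assms(2)]) auto
    have r: "c + L (x + t *\<^sub>R (y - x)) = ?r + t *\<^sub>R ?h"
      by (simp add: linear_add[OF assms(1)] linear_scale[OF assms(1)])
    have sq: "(norm (?r + t *\<^sub>R ?h))\<^sup>2 = (norm ?r)\<^sup>2 + 2 * t * (?r \<bullet> ?h) + t\<^sup>2 * (norm ?h)\<^sup>2"
      by (simp add: power2_norm_add power_mult_distrib)
    have "f x + Y \<bullet> ?r + \<sigma> / 2 * (norm ?r)\<^sup>2
        \<le> f (x + t *\<^sub>R (y - x)) + Y \<bullet> (?r + t *\<^sub>R ?h) + \<sigma> / 2 * (norm (?r + t *\<^sub>R ?h))\<^sup>2"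
      using min[of "x + t *\<^sub>R (y - x)"] unfolding r .
    also have "\<dots> = f (x + t *\<^sub>R (y - x)) + Y \<bullet> ?r + \<sigma> / 2 * (norm ?r)\<^sup>2
        + t * (Y \<bullet> ?h + \<sigma> * (?r \<bullet> ?h)) + t\<^sup>2 * (\<sigma> / 2 * (norm ?h)\<^sup>2)"
      unfolding sq by (simp add: inner_add_right algebra_simps)
    finally have "0 \<le> f (x + t *\<^sub>R (y - x)) - f x + t * (Y \<bullet> ?h + \<sigma> * (?r \<bullet> ?h))
        + t\<^sup>2 * (\<sigma> / 2 * (norm ?h)\<^sup>2)"
      by linarith
    moreover have "t * (f y - f x + (Y + \<sigma> *\<^sub>R ?r) \<bullet> ?h)
        = t * f y - t * f x + t * (Y \<bullet> ?h + \<sigma> * (?r \<bullet> ?h))"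
      by (simp add: inner_add_left distrib_left right_diff_distrib)
    moreover have "(1 - t) * f x = f x - t * f x"
      by (simp add: left_diff_distrib)
    ultimately show ?thesis
      using conv by linarith
  qed
  then have "0 \<le> f y - f x + (Y + \<sigma> *\<^sub>R ?r) \<bullet> ?h"
  proof (rule nonneg_if_perturbation_nonneg[rotated])
    show "0 \<le> \<sigma> / 2 * (norm ?h)\<^sup>2" using assms(3) by simp
  qed
  then show ?thesis by simp
qed

lemma aug_lag_dt_stationary:
  assumes "linear J" "sig \<ge> 0"
    and "\<forall>dt. aug_lag lam sig B J X E dt0 Y \<le> aug_lag lam sig B J X E dt Y"
  shows "(Y + sig *\<^sub>R (B + J dt0 - X - E)) \<bullet> J v = 0"
proof -
  have res: "B + J dt - X - E = (B - X - E) + J dt" for dt by simp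
  have "0 \<le> (Y + sig *\<^sub>R (B + J dt0 - X - E)) \<bullet> J (dt - dt0)" for dt
    using convex_plus_quadratic_min_variational_ineq[OF assms(1) _ assms(2),
        where f = "\<lambda>_. 0" and c = "B - X - E" and x = dt0 and y = dt and Y = Y]
      assms(3) by (simp add: aug_lag_def res convex_on_const)
  from this[of "dt0 + v"] this[of "dt0 - v"] show ?thesis
    by (simp add: linear_neg[OF assms(1)])
qed

lemma aug_lag_E_variational_ineq:
  assumes "lam \<ge> 0" "sig \<ge> 0"
    and "\<forall>E. aug_lag lam sig B J X E1 dt Y \<le> aug_lag lam sig B J X E dt Y"
  shows "(Y + sig *\<^sub>R (B + J dt - X - E1)) \<bullet> (E - E1) \<le> lam * (l1_norm E - l1_norm E1)"
proof -
  let ?c = "B + J dt - X"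
  have res: "B + J dt - X - E = ?c + - E" for E by simp
  have "lam * l1_norm E1 + Y \<bullet> (?c + - E1) + sig / 2 * (norm (?c + - E1))\<^sup>2
      \<le> lam * l1_norm E + Y \<bullet> (?c + - E) + sig / 2 * (norm (?c + - E))\<^sup>2" for E
    using assms(3) unfolding aug_lag_def res by (smt (verit))
  then have "lam * l1_norm E1 - lam * l1_norm E \<le> (Y + sig *\<^sub>R (?c + - E1)) \<bullet> - (E - E1)"
    by (rule convex_plus_quadratic_min_variational_ineq[OF linear_uminus
          convex_on_cmul[OF assms(1) convex_on_l1_norm] assms(2)])
  then show ?thesis by (simp add: inner_diff_right right_diff_distrib)
qed

lemma aug_lag_expand:
  assumes "linear J"
  shows "aug_lag lam sig B J X E dt Y = aug_lag lam sig B J X E1 dt1 Y + lam * (l1_norm E - l1_norm E1)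
      + (Y + sig *\<^sub>R (B + J dt1 - X - E1)) \<bullet> (J (dt - dt1) - (E - E1))
      + sig / 2 * (norm (J (dt - dt1) - (E - E1)))\<^sup>2"
proof -
  let ?r = "B + J dt1 - X - E1" and ?u = "J (dt - dt1) - (E - E1)"
  have res: "B + J dt - X - E = ?r + ?u" by (simp add: linear_diff[OF assms(1)])
  show ?thesis
    unfolding aug_lag_def res power2_norm_add
    by (simp add: inner_add_left inner_add_right algebra_simps)
qed

definition proj_range :: "('a::euclidean_space \<Rightarrow> 'b::euclidean_space) \<Rightarrow> 'b \<Rightarrow> 'b" where
  "proj_range J u = J (inv (adjoint J \<circ> J) (adjoint J u))"

context
  fixes J :: "'a::euclidean_space \<Rightarrow> 'b::euclidean_space"
  assumes lin: "linear J" and bij: "bij (adjoint J \<circ> J)"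
begin

lemma proj_range_orthogonal: "(u - proj_range J u) \<bullet> J v = 0"
proof -
  have "adjoint J (J (inv (adjoint J \<circ> J) (adjoint J u))) = adjoint J u"
    using surj_f_inv_f[OF bij_is_surj[OF bij]] by simp
  then have "adjoint J (u - proj_range J u) = 0"
    unfolding proj_range_def by (simp add: linear_diff[OF adjoint_linear[OF lin]])
  then show ?thesis by (metis adjoint_clauses(2)[OF lin] inner_zero_left)
qed

lemma proj_range_unique:
  assumes "\<And>v. (u - J a) \<bullet> J v = 0"
  shows "proj_range J u = J a"
proof -
  have "adjoint J (u - J a) \<bullet> adjoint J (u - J a) = 0"
    using assms by (simp add: adjoint_clauses(1)[OF lin, symmetric] inner_commute)
  then have "adjoint J u = (adjoint J \<circ> J) a"
    by (simp add: linear_diff[OF adjoint_linear[OF lin]])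
  then show ?thesis
    unfolding proj_range_def using inv_f_f[OF bij_is_inj[OF bij]] by simp
qed

lemma proj_range_add: "proj_range J (u + w) = proj_range J u + proj_range J w"
proof -
  let ?a = "inv (adjoint J \<circ> J) (adjoint J u) + inv (adjoint J \<circ> J) (adjoint J w)"
  have "(u + w - J ?a) \<bullet> J v = 0" for v
    using proj_range_orthogonal[of u v] proj_range_orthogonal[of w v]
    by (simp add: proj_range_def linear_add[OF lin] inner_diff_left inner_add_left)
  then have "proj_range J (u + w) = J ?a"
    by (rule proj_range_unique)
  then show ?thesis
    by (simp add: proj_range_def linear_add[OF lin])
qed

lemma inner_proj_range: "u \<bullet> proj_range J w = proj_range J u \<bullet> proj_range J w"
  using proj_range_orthogonal[of u] unfolding proj_range_def
  by (simp add: inner_diff_left)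

lemma proj_range_image_eq_0:
  assumes "proj_range J (J e) = 0"
  shows "e = 0"
proof -
  have "J e = 0" using proj_range_unique[of "J e" e] assms by simp
  then have "(adjoint J \<circ> J) e = (adjoint J \<circ> J) 0"
    by (simp add: linear_0[OF lin] linear_0[OF adjoint_linear[OF lin]])
  then show ?thesis using bij_is_inj[OF bij] by (meson injD)
qed

lemma norm_residual_plus_proj_range_pos:
  assumes "(d, e) \<noteq> (0, 0)"
  shows "0 < (norm (J e - d))\<^sup>2 + (norm (proj_range J d))\<^sup>2"
proof (rule ccontr)
  assume "\<not> ?thesis"
  then have "(norm (J e - d))\<^sup>2 = 0" "(norm (proj_range J d))\<^sup>2 = 0"
    by (smt (verit) zero_le_power2)+
  then have "d = J e" "proj_range J (J e) = 0"
    by simp_all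
  moreover from this(2) have "e = 0"
    by (rule proj_range_image_eq_0)
  ultimately show False
    using assms linear_0[OF lin] by simp
qed

end

lemma T_seminorm_sq_eq:
  fixes J :: "real^'p \<Rightarrow> real^'n^'m"
  assumes "linear J" "bij (adjoint J \<circ> J)"
  shows "T_seminorm_sq J w = (norm (proj_range J (fst w)))\<^sup>2"
  using inner_proj_range[OF assms, of "fst w" "fst w"]
  by (simp add: T_seminorm_sq_def T_op_def inner_prod_def power2_norm_eq_inner proj_range_def)

lemma T_seminorm_sq_expand:
  fixes J :: "real^'p \<Rightarrow> real^'n^'m"
  assumes "linear J" "bij (adjoint J \<circ> J)"
  shows "T_seminorm_sq J ((E, dt) - (E0, dt0))
    = T_seminorm_sq J ((E1, dt1) - (E0, dt0)) + (norm (proj_range J (E - E1)))\<^sup>2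
      + 2 * (proj_range J (E1 - E0) \<bullet> (E - E1))"
proof -
  have "E - E0 = (E - E1) + (E1 - E0)" by simp
  moreover have "proj_range J (E - E1) \<bullet> proj_range J (E1 - E0) = proj_range J (E1 - E0) \<bullet> (E - E1)"
    using inner_proj_range[OF assms, of "E - E1" "E1 - E0"] by (simp add: inner_commute)
  ultimately show ?thesis
    by (simp only: T_seminorm_sq_eq[OF assms] fst_diff fst_conv proj_range_add[OF assms] power2_norm_add)
qed

lemma aug_lag_dt_argmin_diff:
  assumes "linear J" "bij (adjoint J \<circ> J)" "sig > 0"
    and "\<forall>dt. aug_lag lam sig B J X E0 dt0 Y \<le> aug_lag lam sig B J X E0 dt Y"
    and "\<forall>dt. aug_lag lam sig B J X E1 dt1 Y \<le> aug_lag lam sig B J X E1 dt Y"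
  shows "proj_range J (E1 - E0) = J (dt1 - dt0)"
proof (rule proj_range_unique[OF assms(1,2)])
  fix v
  have "(Y + sig *\<^sub>R (B + J dt0 - X - E0)) \<bullet> J v - (Y + sig *\<^sub>R (B + J dt1 - X - E1)) \<bullet> J v = 0"
    using aug_lag_dt_stationary[OF assms(1) _ assms(4)] aug_lag_dt_stationary[OF assms(1) _ assms(5)]
      assms(3) by simp
  then have "sig * ((E1 - E0 - J (dt1 - dt0)) \<bullet> J v) = 0"
    by (simp add: linear_diff[OF assms(1)] inner_diff_left inner_add_left algebra_simps)
  then show "(E1 - E0 - J (dt1 - dt0)) \<bullet> J v = 0"
    using assms(3) by simp
qed

theorem lemma1:
  fixes B Xk1 Ek Yk :: "real^'n^'m"
    and J :: "real^'p \<Rightarrow> real^'n^'m"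
    and dtk dthalf dtk1 :: "real^'p"
    and Ek1 :: "real^'n^'m"
    and lam sig :: real
  assumes "linear J"
    and "bij (adjoint J \<circ> J)"
    and "lam > 0" and "sig > 0"
    and "\<forall>dt. aug_lag lam sig B J Xk1 Ek dthalf Yk \<le> aug_lag lam sig B J Xk1 Ek dt Yk"
    and "\<forall>E. aug_lag lam sig B J Xk1 Ek1 dthalf Yk \<le> aug_lag lam sig B J Xk1 E dthalf Yk"
    and "\<forall>dt. aug_lag lam sig B J Xk1 Ek1 dtk1 Yk \<le> aug_lag lam sig B J Xk1 Ek1 dt Yk"
  shows "\<forall>E dt. (E, dt) \<noteq> (Ek1, dtk1) \<longrightarrow>
           aug_lag lam sig B J Xk1 Ek1 dtk1 Yk + sig / 2 * T_seminorm_sq J ((Ek1, dtk1) - (Ek, dtk))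
         < aug_lag lam sig B J Xk1 E dt Yk + sig / 2 * T_seminorm_sq J ((E, dt) - (Ek, dtk))"
proof (intro allI impI)
  fix E dt
  assume ne: "(E, dt) \<noteq> (Ek1, dtk1)"
  let ?P = "proj_range J"
  define G where "G = Yk + sig *\<^sub>R (B + J dtk1 - Xk1 - Ek1)"
  define d where "d = E - Ek1"
  define u where "u = J (dt - dtk1) - d"
  have half_step: "?P (Ek1 - Ek) = J (dtk1 - dthalf)"
    by (rule aug_lag_dt_argmin_diff[OF assms(1,2,4,5,7)])
  have "Yk + sig *\<^sub>R (B + J dthalf - Xk1 - Ek1) = G - sig *\<^sub>R ?P (Ek1 - Ek)"
    unfolding G_def half_step by (simp add: linear_diff[OF assms(1)] algebra_simps)
  then have E_step: "G \<bullet> d - sig * (?P (Ek1 - Ek) \<bullet> d) \<le> lam * (l1_norm E - l1_norm Ek1)"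
    using aug_lag_E_variational_ineq[OF _ _ assms(6), of E] assms(3,4)
    by (simp add: d_def inner_diff_left)
  have aug: "aug_lag lam sig B J Xk1 E dt Yk
      = aug_lag lam sig B J Xk1 Ek1 dtk1 Yk + lam * (l1_norm E - l1_norm Ek1) - G \<bullet> d + sig / 2 * (norm u)\<^sup>2"
    using aug_lag_expand[OF assms(1), of lam sig B Xk1 E dt Yk Ek1 dtk1]
      aug_lag_dt_stationary[OF assms(1) _ assms(7), of "dt - dtk1"] assms(4)
    by (simp add: G_def u_def d_def inner_diff_right)
  have "0 < sig / 2 * ((norm u)\<^sup>2 + (norm (?P d))\<^sup>2)"
    using norm_residual_plus_proj_range_pos[OF assms(1,2), of d "dt - dtk1"] ne assms(4)
    by (simp add: u_def d_def)
  moreover have "T_seminorm_sq J ((E, dt) - (Ek, dtk)) = T_seminorm_sq J ((Ek1, dtk1) - (Ek, dtk))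
      + (norm (?P d))\<^sup>2 + 2 * (?P (Ek1 - Ek) \<bullet> d)"
    unfolding d_def by (rule T_seminorm_sq_expand[OF assms(1,2)])
  ultimately show "aug_lag lam sig B J Xk1 Ek1 dtk1 Yk + sig / 2 * T_seminorm_sq J ((Ek1, dtk1) - (Ek, dtk))
         < aug_lag lam sig B J Xk1 E dt Yk + sig / 2 * T_seminorm_sq J ((E, dt) - (Ek, dtk))"
    using aug E_step by (simp add: algebra_simps)
qed

end
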